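(* Let $Q$ be a finite set, let $M\subseteq Q^5$ be an MDS code with code distance $4$, and let $M'\subseteq Q^4$ be a projection of $M$ in some direction $i\in\{1,\dots,5\}$. Then there exists an MDS code $C\subseteq Q^4$ with code distance $2$ such that $M'\subseteq C$.
   Context: A subset $C\subseteq Q^d$ is an MDS code with code distance $\varrho$ if $|C\cap\Gamma|=1$ for every $(\varrho-1)$-dimensional axis-aligned plane $\Gamma\subseteq Q^d$ (the set obtained by fixing some $d-\varrho+1$ coordinates and letting the other $\varrho-1$ range over $Q$). The projection of $C\subseteq Q^d$ in the $i$th direction is $C_i=\{(x_1,\dots,x_{i-1},x_{i+1},\dots,x_d)\mid \exists x_i: (x_1,\dots,x_d)\in C\}\subseteq Q^{d-1}$. *)

theory Defs
  imports Main
begin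

definition cube :: "'a set \<Rightarrow> nat \<Rightarrow> 'a list set" where
  "cube Q d = {x. length x = d \<and> set x \<subseteq> Q}"

definition axis_plane :: "'a set \<Rightarrow> nat \<Rightarrow> nat set \<Rightarrow> (nat \<Rightarrow> 'a) \<Rightarrow> 'a list set" where
  "axis_plane Q d S v = {x \<in> cube Q d. \<forall>i\<in>S. x ! i = v i}"

text \<open>MDS code with code distance rho: meets every (rho-1)-dimensional axis-aligned
  plane (d-rho+1 fixed coordinates) in exactly one point.\<close>
definition MDS_code :: "'a set \<Rightarrow> nat \<Rightarrow> nat \<Rightarrow> 'a list set \<Rightarrow> bool" where
  "MDS_code Q d rho C \<longleftrightarrow> C \<subseteq> cube Q d \<and>
     (\<forall>S v. S \<subseteq> {..<d} \<and> card S = d - rho + 1 \<and> (\<forall>i\<in>S. v i \<in> Q) \<longrightarrow>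
        card (C \<inter> axis_plane Q d S v) = 1)"

text \<open>Projection in direction i (0-indexed): delete the i-th coordinate.\<close>
definition proj :: "nat \<Rightarrow> 'a list set \<Rightarrow> 'a list set" where
  "proj i C = (\<lambda>x. take i x @ drop (Suc i) x) ` C"

end

theory Submission
  imports Defs
begin

text \<open>Every codeword of M is determined by any two of its coordinates, so the value
  at a third coordinate i, as a function of the values at two others k and l, is a Latin
  square L(k,l;i) on Q.  Deleting coordinate i and calling the remaining ones
  j1 < j2 < j3 < j4, every projected word x satisfies L(j1,j2;i)(x1,x2) = L(j3,j4;i)(x3,x4),
  both sides being the deleted symbol.  The set of all words satisfying this equation is an
  MDS code with distance 2, because any three of its coordinates determine the fourth.\<close>

lemma MDS_code_distance_2I:
  assumes "2 \<le> d" and "C \<subseteq> cube Q d"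
    and unique_completion: "\<And>t u. t < d \<Longrightarrow> u \<in> cube Q d \<Longrightarrow> \<exists>!q. q \<in> Q \<and> u[t := q] \<in> C"
  shows "MDS_code Q d 2 C"
  unfolding MDS_code_def
proof (intro conjI allI impI)
  show "C \<subseteq> cube Q d" by fact
  fix S v assume "S \<subseteq> {..<d} \<and> card S = d - 2 + 1 \<and> (\<forall>n\<in>S. v n \<in> Q)"
  then have S: "S \<subseteq> {..<d}" "card S = d - 1" and v: "\<And>n. n \<in> S \<Longrightarrow> v n \<in> Q"
    using assms(1) by auto
  obtain t where t: "t < d" "t \<notin> S"
  proof (rule ccontr)
    assume "\<not> thesis"
    then have "S = {..<d}" using S that by auto
    then show False using S \<open>2 \<le> d\<close> by simp
  qed
  have "S = {..<d} - {t}"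
    using S t by (intro card_subset_eq) auto
  then have S_iff: "n \<in> S \<longleftrightarrow> n < d \<and> n \<noteq> t" for n
    by auto
  obtain s where "s \<in> S"
    using S \<open>2 \<le> d\<close> by fastforce
  define u where "u = map (\<lambda>n. if n \<in> S then v n else v s) [0..<d]"
  have u: "u \<in> cube Q d"
    using v \<open>s \<in> S\<close> by (auto simp: u_def cube_def)
  obtain q where q: "q \<in> Q" "u[t := q] \<in> C"
    and q_unique: "\<And>q'. q' \<in> Q \<Longrightarrow> u[t := q'] \<in> C \<Longrightarrow> q' = q"
    using unique_completion[OF t(1) u] by blast
  have "C \<inter> axis_plane Q d S v = {u[t := q]}"
  proof (intro equalityI subsetI)
    fix x assume x: "x \<in> C \<inter> axis_plane Q d S v"
    then have "length x = d" "x ! t \<in> Q"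
      using t(1) by (auto simp: axis_plane_def cube_def)
    moreover have "x = u[t := x ! t]"
      using x u t by (intro nth_equalityI) (auto simp: axis_plane_def cube_def u_def nth_list_update S_iff)
    ultimately show "x \<in> {u[t := q]}"
      using x q_unique by (metis IntD1 singletonI)
  next
    fix x assume "x \<in> {u[t := q]}"
    then show "x \<in> C \<inter> axis_plane Q d S v"
      using q assms(2) t u by (auto simp: axis_plane_def cube_def u_def S_iff)
  qed
  then show "card (C \<inter> axis_plane Q d S v) = 1"
    by simp
qed

definition latin_square :: "'a set \<Rightarrow> ('a \<Rightarrow> 'a \<Rightarrow> 'a) \<Rightarrow> bool" where
  "latin_square Q L \<longleftrightarrow> (\<forall>x\<in>Q. bij_betw (L x) Q Q) \<and> (\<forall>y\<in>Q. bij_betw (\<lambda>x. L x y) Q Q)"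

lemma bij_betw_ex1_preimage:
  assumes "bij_betw f A B" and "y \<in> B"
  shows "\<exists>!x. x \<in> A \<and> f x = y"
  using assms unfolding bij_betw_def inj_on_def by blast

lemma latin_square_closed:
  "latin_square Q L \<Longrightarrow> x \<in> Q \<Longrightarrow> y \<in> Q \<Longrightarrow> L x y \<in> Q"
  unfolding latin_square_def bij_betw_def by blast

lemma latin_square_ex1_left:
  "latin_square Q L \<Longrightarrow> y \<in> Q \<Longrightarrow> z \<in> Q \<Longrightarrow> \<exists>!x. x \<in> Q \<and> L x y = z"
  unfolding latin_square_def using bij_betw_ex1_preimage[of "\<lambda>x. L x y" Q Q z] by blast

lemma latin_square_ex1_right:
  "latin_square Q L \<Longrightarrow> x \<in> Q \<Longrightarrow> z \<in> Q \<Longrightarrow> \<exists>!y. y \<in> Q \<and> L x y = z"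
  unfolding latin_square_def using bij_betw_ex1_preimage[of "L x" Q Q z] by blast

definition latin_code :: "'a set \<Rightarrow> ('a \<Rightarrow> 'a \<Rightarrow> 'a) \<Rightarrow> ('a \<Rightarrow> 'a \<Rightarrow> 'a) \<Rightarrow> 'a list set" where
  "latin_code Q L\<^sub>1 L\<^sub>2 = {x \<in> cube Q 4. L\<^sub>1 (x ! 0) (x ! 1) = L\<^sub>2 (x ! 2) (x ! 3)}"

lemma MDS_code_latin_code:
  assumes L\<^sub>1: "latin_square Q L\<^sub>1" and L\<^sub>2: "latin_square Q L\<^sub>2"
  shows "MDS_code Q 4 2 (latin_code Q L\<^sub>1 L\<^sub>2)"
proof (rule MDS_code_distance_2I)
  show "2 \<le> (4::nat)"
    by simp
  show "latin_code Q L\<^sub>1 L\<^sub>2 \<subseteq> cube Q 4"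
    by (auto simp: latin_code_def)
  fix t u assume "t < (4::nat)" and u: "u \<in> cube Q 4"
  then have t: "t = 0 \<or> t = 1 \<or> t = 2 \<or> t = 3"
    by auto
  have length_u: "length u = 4" and u_nth: "\<And>n. n < 4 \<Longrightarrow> u ! n \<in> Q"
    using u by (auto simp: cube_def)
  have code_iff: "u[t := q] \<in> latin_code Q L\<^sub>1 L\<^sub>2 \<longleftrightarrow>
      q \<in> Q \<and> L\<^sub>1 (u[t := q] ! 0) (u[t := q] ! 1) = L\<^sub>2 (u[t := q] ! 2) (u[t := q] ! 3)" for q
    using u \<open>t < 4\<close> set_update_memI[of t u q]
    by (auto simp: latin_code_def cube_def set_update_subsetI dest: subsetD[OF set_update_subset_insert])
  have "\<exists>!q. q \<in> Q \<and> L\<^sub>1 (u[t := q] ! 0) (u[t := q] ! 1) = L\<^sub>2 (u[t := q] ! 2) (u[t := q] ! 3)"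
    using t
  proof (elim disjE)
    assume "t = 0"
    then show ?thesis
      using latin_square_ex1_left[OF L\<^sub>1 u_nth latin_square_closed[OF L\<^sub>2 u_nth u_nth], of 1 2 3]
      by (simp add: length_u)
  next
    assume "t = 1"
    then show ?thesis
      using latin_square_ex1_right[OF L\<^sub>1 u_nth latin_square_closed[OF L\<^sub>2 u_nth u_nth], of 0 2 3]
      by (simp add: length_u)
  next
    assume "t = 2"
    then show ?thesis
      using latin_square_ex1_left[OF L\<^sub>2 u_nth latin_square_closed[OF L\<^sub>1 u_nth u_nth], of 3 0 1]
      by (simp add: length_u eq_commute[of "L\<^sub>1 _ _"])
  next
    assume "t = 3"
    then show ?thesis
      using latin_square_ex1_right[OF L\<^sub>2 u_nth latin_square_closed[OF L\<^sub>1 u_nth u_nth], of 2 0 1]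
      by (simp add: length_u eq_commute[of "L\<^sub>1 _ _"])
  qed
  then show "\<exists>!q. q \<in> Q \<and> u[t := q] \<in> latin_code Q L\<^sub>1 L\<^sub>2"
    unfolding code_iff by simp
qed

locale two_dimensional_MDS_code =
  fixes Q :: "'a set" and d rho :: nat and M :: "'a list set"
  assumes MDS: "MDS_code Q d rho M" and two_information_symbols: "d - rho + 1 = 2"
begin

lemma codeword_nth_mem:
  assumes "m \<in> M" "n < d"
  shows "m ! n \<in> Q"
proof -
  have "m \<in> cube Q d"
    using MDS assms(1) by (auto simp: MDS_code_def)
  then show ?thesis
    using assms(2) nth_mem by (auto simp: cube_def)
qed

lemma ex1_codeword:
  assumes "k < d" "l < d" "k \<noteq> l" "x \<in> Q" "y \<in> Q"
  shows "\<exists>!m. m \<in> M \<and> m ! k = x \<and> m ! l = y"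
proof -
  define v where "v n = (if n = k then x else y)" for n
  have "card (M \<inter> axis_plane Q d {k, l} v) = 1"
  proof (rule MDS[unfolded MDS_code_def, THEN conjunct2, rule_format])
    show "{k, l} \<subseteq> {..<d} \<and> card {k, l} = d - rho + 1 \<and> (\<forall>i\<in>{k, l}. v i \<in> Q)"
      using assms two_information_symbols by (simp add: v_def)
  qed
  moreover have "M \<inter> axis_plane Q d {k, l} v = {m \<in> M. m ! k = x \<and> m ! l = y}"
    using MDS \<open>k \<noteq> l\<close> by (auto simp: MDS_code_def axis_plane_def v_def)
  ultimately obtain m where "{m \<in> M. m ! k = x \<and> m ! l = y} = {m}"
    by (metis card_1_singletonE)
  then show ?thesis
    by (simp add: set_eq_iff)
qed

lemma codeword_eqI:
  assumes "k < d" "l < d" "k \<noteq> l" "m \<in> M" "m' \<in> M" "m ! k = m' ! k" "m ! l = m' ! l"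
  shows "m = m'"
proof -
  have "m ! k \<in> Q" "m ! l \<in> Q"
    using assms codeword_nth_mem by simp_all
  then obtain m\<^sub>0 where "\<And>m''. m'' \<in> M \<and> m'' ! k = m ! k \<and> m'' ! l = m ! l \<Longrightarrow> m'' = m\<^sub>0"
    using ex1_codeword[OF assms(1-3)] by metis
  then show ?thesis
    using assms(4-) by metis
qed

end

text \<open>The square L(k,l;i) above; its values outside Q are meaningless, since THE then has
  no unique witness.\<close>
definition code_square :: "'a list set \<Rightarrow> nat \<Rightarrow> nat \<Rightarrow> nat \<Rightarrow> 'a \<Rightarrow> 'a \<Rightarrow> 'a" where
  "code_square M k l i x y = (THE m. m \<in> M \<and> m ! k = x \<and> m ! l = y) ! i"

lemma code_square_swap: "code_square M k l i x y = code_square M l k i y x"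
  unfolding code_square_def by (simp add: conj_commute conj_left_commute)

context two_dimensional_MDS_code
begin

lemma code_square_nth:
  assumes "k < d" "l < d" "k \<noteq> l" "m \<in> M"
  shows "code_square M k l i (m ! k) (m ! l) = m ! i"
proof -
  have "(THE m'. m' \<in> M \<and> m' ! k = m ! k \<and> m' ! l = m ! l) = m"
    using assms codeword_eqI by (intro the_equality) blast+
  then show ?thesis
    by (simp add: code_square_def)
qed

lemma bij_betw_code_square:
  assumes "k < d" "l < d" "i < d" "k \<noteq> l" "k \<noteq> i" "l \<noteq> i" "x \<in> Q"
  shows "bij_betw (code_square M k l i x) Q Q"
proof -
  have row: "\<exists>m. m \<in> M \<and> m ! k = x \<and> m ! l = y \<and> code_square M k l i x y = m ! i"
    if y: "y \<in> Q" for y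
  proof -
    obtain m where "m \<in> M" "m ! k = x" "m ! l = y"
      using ex1_codeword[OF assms(1,2,4,7) y] by blast
    then show ?thesis
      using code_square_nth[OF assms(1,2,4)] by blast
  qed
  show ?thesis
    unfolding bij_betw_def
  proof (intro conjI inj_onI equalityI subsetI)
    fix y y' assume "y \<in> Q" "y' \<in> Q" and eq: "code_square M k l i x y = code_square M k l i x y'"
    obtain m where m: "m \<in> M" "m ! k = x" "m ! l = y" "code_square M k l i x y = m ! i"
      using row[OF \<open>y \<in> Q\<close>] by blast
    obtain m' where m': "m' \<in> M" "m' ! k = x" "m' ! l = y'" "code_square M k l i x y' = m' ! i"
      using row[OF \<open>y' \<in> Q\<close>] by blast
    have "m = m'"
      using codeword_eqI[OF assms(1,3,5) m(1) m'(1)] m m' eq by simp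
    then show "y = y'"
      using m m' by simp
  next
    fix z assume "z \<in> code_square M k l i x ` Q"
    then obtain y where "y \<in> Q" "z = code_square M k l i x y"
      by blast
    then obtain m where "m \<in> M" "z = m ! i"
      using row by metis
    then show "z \<in> Q"
      using codeword_nth_mem assms(3) by simp
  next
    fix z assume "z \<in> Q"
    then obtain m where m: "m \<in> M" "m ! k = x" "m ! i = z"
      using ex1_codeword[OF assms(1,3,5,7)] by blast
    then have "z = code_square M k l i x (m ! l)"
      using code_square_nth[OF assms(1,2,4) m(1)] by simp
    moreover have "m ! l \<in> Q"
      using codeword_nth_mem m(1) assms(2) .
    ultimately show "z \<in> code_square M k l i x ` Q"
      by (rule image_eqI)
  qed
qed

lemma codeword_in_latin_code:
  assumes "m \<in> M" "j\<^sub>1 < d" "j\<^sub>2 < d" "j\<^sub>3 < d" "j\<^sub>4 < d" "j\<^sub>1 \<noteq> j\<^sub>2" "j\<^sub>3 \<noteq> j\<^sub>4"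
  shows "[m ! j\<^sub>1, m ! j\<^sub>2, m ! j\<^sub>3, m ! j\<^sub>4] \<in> latin_code Q (code_square M j\<^sub>1 j\<^sub>2 i) (code_square M j\<^sub>3 j\<^sub>4 i)"
  using assms codeword_nth_mem code_square_nth[of j\<^sub>1 j\<^sub>2 m i] code_square_nth[of j\<^sub>3 j\<^sub>4 m i]
  by (simp add: latin_code_def cube_def)

lemma latin_square_code_square:
  assumes "k < d" "l < d" "i < d" "k \<noteq> l" "k \<noteq> i" "l \<noteq> i"
  shows "latin_square Q (code_square M k l i)"
  using assms bij_betw_code_square bij_betw_code_square[of l k i]
  by (simp add: latin_square_def code_square_swap[of M k l i])

end

lemma take_drop_Suc_eq_map_nth:
  assumes "i < length xs"
  shows "take i xs @ drop (Suc i) xs = map (\<lambda>n. xs ! (if n < i then n else Suc n)) [0..<length xs - 1]"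
  using assms by (intro nth_equalityI) (auto simp: nth_append min_def)

theorem proposition4:
  fixes Q :: "'a set" and M :: "'a list set" and i :: nat
  assumes "finite Q"
    and "MDS_code Q 5 4 M"
    and "i < 5"
  shows "\<exists>C. MDS_code Q 4 2 C \<and> proj i M \<subseteq> C"
proof -
  interpret two_dimensional_MDS_code Q 5 4 M
    using assms(2) by unfold_locales simp_all
  define j where "j n = (if n < i then n else Suc n)" for n
  have j: "j n < 5" "j n \<noteq> i" if "n < 4" for n
    using that \<open>i < 5\<close> by (auto simp: j_def)
  have j_distinct: "j 0 \<noteq> j 1" "j 2 \<noteq> j 3"
    by (auto simp: j_def)
  define C where "C = latin_code Q (code_square M (j 0) (j 1) i) (code_square M (j 2) (j 3) i)"
  have "MDS_code Q 4 2 C"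
    unfolding C_def using j j_distinct \<open>i < 5\<close>
    by (intro MDS_code_latin_code latin_square_code_square) simp_all
  moreover have "proj i M \<subseteq> C"
  proof (unfold proj_def, rule image_subsetI)
    fix m assume m: "m \<in> M"
    then have "length m = 5"
      using MDS by (auto simp: MDS_code_def cube_def)
    then have "take i m @ drop (Suc i) m = [m ! j 0, m ! j 1, m ! j 2, m ! j 3]"
      using take_drop_Suc_eq_map_nth[of i m] \<open>i < 5\<close> unfolding j_def[symmetric]
      by (simp add: upt_rec numeral_2_eq_2 numeral_3_eq_3)
    then show "take i m @ drop (Suc i) m \<in> C"
      unfolding C_def using codeword_in_latin_code[OF m] j j_distinct by simp
  qed
  ultimately show ?thesis
    by blast
qed

end
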